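(* Let $\mathbb{W}$ be a union of lines and ACM points in $\mathbb{P}^1\times\mathbb{P}^1$ and let $\tau$ be the tuple of the standard generating set $\mathcal{G}(I_{\mathbb{W}})$ listed in the standard order. Suppose $\mathcal{G}(I_{\mathbb{W}})=A\sqcup B$ is an $r$-cut partition with respect to $\tau$, and let $J=\langle A\rangle$, $K=\langle B\rangle$. Then $J\cap K$ is minimally generated by $r$ elements (for $r=0$, $J\cap K=0$).
   Context: $R=\mathbb{C}[x_0,x_1,y_0,y_1]$ is bigraded with $\deg x_i=(1,0)$, $\deg y_i=(0,1)$. For $A=[a_0:a_1]\in\mathbb{P}^1$ let $H_A=a_1x_0-a_0x_1$ and for $B=[b_0:b_1]$ let $V_B=b_1y_0-b_0y_1$; the same symbol denotes the form and its zero set (horizontal, resp. vertical, line or ruling). $I_{A\times B}=\langle H_A,V_B\rangle$, $I_{\mathbb{X}}=\bigcap_{P\in\mathbb{X}}I_P$, and a finite set $\mathbb{X}$ is ACM if $R/I_{\mathbb{X}}$ is Cohen–Macaulay. A union of lines and points is $\mathbb{W}=\{P_1,\dots,P_r,H_1,\dots,H_t,V_1,\dots,V_p\}$ (distinct points, horizontal lines and vertical lines, no point on any of the lines), $\mathbb{X}_{\mathbb{W}}=\{P_1,\dots,P_r\}$, $I_{\mathbb{W}}=\bigcap_iI_{P_i}\cap\bigcap_i\langle H_i\rangle\cap\bigcap_j\langle V_j\rangle$; it is a union of lines and ACM points if $\mathbb{X}_{\mathbb{W}}$ is ACM. For ACM $\mathbb{X}$ with $\pi_1(\mathbb{X})=\{A_1,\dots,A_h\}$,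 $\pi_2(\mathbb{X})=\{B_1,\dots,B_v\}$, labelled so that $\alpha_i=|\{P\in\mathbb{X}:P\in H_{A_i}\}|$ satisfies $\alpha_1\ge\cdots\ge\alpha_h$ and the counts on $V_{B_j}$ are nonincreasing, $I_{\mathbb{X}}$ is minimally generated by $\{H_{A_1}\cdots H_{A_h},\ V_{B_1}\cdots V_{B_v}\}\cup\{H_{A_1}\cdots H_{A_i}V_{B_1}\cdots V_{B_{\alpha_{i+1}}}:\alpha_{i+1}<\alpha_i\}$. The standard generating set of $I_{\mathbb{W}}$ is this set for $\mathbb{X}=\mathbb{X}_{\mathbb{W}}$, each element multiplied by $\Lambda=\prod_iH_i\prod_jV_j$ (just $\{\Lambda\}$ if $\mathbb{X}_{\mathbb{W}}=\emptyset$). The standard order lists these generators by the lexicographic order ($y_0>y_1>x_0>x_1$) of their leading terms, largest first; concretely: $\Lambda V_{B_1}\cdots V_{B_v}$ first, then $\Lambda H_{A_1}\cdots H_{A_i}V_{B_1}\cdots V_{B_{\alpha_{i+1}}}$ for the indices $i$ with $\alpha_{i+1}<\alpha_i$ in increasing order of $i$, and $\Lambda H_{A_1}\cdots H_{A_h}$ last. Given a tuple $\tau=(\tau_1,\dots,\tau_n)$ of distinct elements of a set $X$ and a partition $X=A\sqcup B$: it is a $0$-partition if $A$ or $B$ is empty; otherwise it is an $r$-cut partition with respect to $\tau$, where $r$ is the number of indices $i\in\{1,\dots,n-1\}$ such that exactly one of $\tau_i,\tau_{i+1}$ lies in $A$. A $1$-cut partition is one of the form $A=\{\tau_i:i\le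 j\}$, $B=\{\tau_i:i>j\}$ (or with $A$ and $B$ swapped) for some $1\le j<n$. *)

theory Defs
  imports Complex_Main "HOL-Library.Poly_Mapping" "HOL-Library.Extended_Nat"
begin

datatype var = X0 | X1 | Y0 | Y1

type_synonym R = "(var \<Rightarrow>\<^sub>0 nat) \<Rightarrow>\<^sub>0 complex"

definition Var :: "var \<Rightarrow> R" where
  "Var v = Poly_Mapping.single (Poly_Mapping.single v 1) 1"

definition Const :: "complex \<Rightarrow> R" where
  "Const c = Poly_Mapping.single 0 c"

text \<open>Points of P^1 are modelled as C \<union> {\<infinity>}: Some a = [1:a], None = [0:1].\<close>
type_synonym P1 = "complex option"

text \<open>H_A = a1 x0 - a0 x1 and V_B = b1 y0 - b0 y1.\<close>
fun Hform :: "P1 \<Rightarrow> R" where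
  "Hform (Some a) = Const a * Var X0 - Var X1"
| "Hform None = Var X0"

fun Vform :: "P1 \<Rightarrow> R" where
  "Vform (Some b) = Const b * Var Y0 - Var Y1"
| "Vform None = Var Y0"

definition ideal_of :: "R set \<Rightarrow> R set" where
  "ideal_of S = {x. \<exists>G f. finite G \<and> G \<subseteq> S \<and> x = (\<Sum>g\<in>G. f g * g)}"

definition is_ideal :: "R set \<Rightarrow> bool" where
  "is_ideal I \<longleftrightarrow> 0 \<in> I \<and> (\<forall>a\<in>I. \<forall>b\<in>I. a + b \<in> I) \<and> (\<forall>a\<in>I. \<forall>c. c * a \<in> I)"

definition is_prime_ideal :: "R set \<Rightarrow> bool" where
  "is_prime_ideal P \<longleftrightarrow> is_ideal P \<and> P \<noteq> UNIV \<and> (\<forall>a b. a * b \<in> P \<longrightarrow> a \<in> P \<or> b \<in> P)"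

definition min_gens :: "R set \<Rightarrow> nat" where
  "min_gens I = (LEAST n. \<exists>G. finite G \<and> card G = n \<and> ideal_of G = I)"

definition irrel :: "R set" where
  "irrel = ideal_of (Var ` UNIV)"

definition regular_seq :: "R set \<Rightarrow> R list \<Rightarrow> bool" where
  "regular_seq I fs \<longleftrightarrow> set fs \<subseteq> irrel
     \<and> ideal_of (I \<union> set fs) \<noteq> UNIV
     \<and> (\<forall>k < length fs. \<forall>g. fs ! k * g \<in> ideal_of (I \<union> set (take k fs))
                              \<longrightarrow> g \<in> ideal_of (I \<union> set (take k fs)))"

definition depth_m :: "R set \<Rightarrow> enat" where
  "depth_m I = Sup {enat (length fs) | fs. regular_seq I fs}"

definition krull_dim_quot :: "R set \<Rightarrow> enat" where
  "krull_dim_quot I = Sup {enat n | n. \<exists>P :: nat \<Rightarrow> R set.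
      (\<forall>i\<le>n. is_prime_ideal (P i) \<and> I \<subseteq> P i) \<and> (\<forall>i<n. P i \<subset> P (Suc i))}"

text \<open>R/I (I homogeneous) is Cohen--Macaulay iff depth w.r.t. the homogeneous maximal
  ideal equals the Krull dimension (graded criterion); the zero ring counts as CM.\<close>
definition CM_quot :: "R set \<Rightarrow> bool" where
  "CM_quot I \<longleftrightarrow> I = UNIV \<or> depth_m I = krull_dim_quot I"

definition I_pt :: "P1 \<times> P1 \<Rightarrow> R set" where
  "I_pt P = ideal_of {Hform (fst P), Vform (snd P)}"

definition I_X :: "(P1 \<times> P1) set \<Rightarrow> R set" where
  "I_X X = (\<Inter>P\<in>X. I_pt P)"

definition ACM :: "(P1 \<times> P1) set \<Rightarrow> bool" where
  "ACM X \<longleftrightarrow> finite X \<and> CM_quot (I_X X)"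

definition alpha :: "(P1 \<times> P1) set \<Rightarrow> P1 \<Rightarrow> nat" where
  "alpha X A = card {P\<in>X. fst P = A}"

definition beta :: "(P1 \<times> P1) set \<Rightarrow> P1 \<Rightarrow> nat" where
  "beta X B = card {P\<in>X. snd P = B}"

definition good_labelling :: "(P1 \<times> P1) set \<Rightarrow> P1 list \<Rightarrow> P1 list \<Rightarrow> bool" where
  "good_labelling X As Bs \<longleftrightarrow>
     distinct As \<and> set As = fst ` X \<and> sorted_wrt (\<lambda>a b. alpha X a \<ge> alpha X b) As \<and>
     distinct Bs \<and> set Bs = snd ` X \<and> sorted_wrt (\<lambda>a b. beta X a \<ge> beta X b) Bs"

text \<open>W = (points, horizontal lines H_A for A in Hs, vertical lines V_B for B in Vs).\<close>
definition union_lines_points :: "(P1 \<times> P1) set \<Rightarrow> P1 set \<Rightarrow> P1 set \<Rightarrow> bool" where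
  "union_lines_points X Hs Vs \<longleftrightarrow> finite X \<and> finite Hs \<and> finite Vs \<and>
     (\<forall>P\<in>X. fst P \<notin> Hs \<and> snd P \<notin> Vs)"

definition Lambda :: "P1 set \<Rightarrow> P1 set \<Rightarrow> R" where
  "Lambda Hs Vs = (\<Prod>A\<in>Hs. Hform A) * (\<Prod>B\<in>Vs. Vform B)"

text \<open>The standard generating set of I_W listed in the standard order (0-based
  indices: generator for i in 1..h-1 with alpha(A_{i+1}) < alpha(A_i) in 1-based terms).\<close>
definition std_gens :: "(P1 \<times> P1) set \<Rightarrow> P1 set \<Rightarrow> P1 set \<Rightarrow> P1 list \<Rightarrow> P1 list \<Rightarrow> R list" where
  "std_gens X Hs Vs As Bs =
    (let L = Lambda Hs Vs in
     if X = {} then [L]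
     else [L * prod_list (map Vform Bs)]
        @ map (\<lambda>i. L * prod_list (map Hform (take i As))
                      * prod_list (map Vform (take (alpha X (As ! i)) Bs)))
              (filter (\<lambda>i. alpha X (As ! i) < alpha X (As ! (i - 1))) [1..<length As])
        @ [L * prod_list (map Hform As)])"

definition cuts :: "R list \<Rightarrow> R set \<Rightarrow> nat" where
  "cuts tau A = card {i. Suc i < length tau \<and> ((tau ! i \<in> A) \<noteq> (tau ! Suc i \<in> A))}"

end

theory Submission
  imports Defs
begin

text \<open>Write the standard generators in order as \<open>e\<^sub>k = \<Lambda> p\<^sub>k q\<^sub>k\<close>, where \<open>p\<^sub>k\<close> is a product of
  horizontal forms growing along the list with respect to divisibility, \<open>q\<^sub>k\<close> a product of vertical
  forms shrinking along it, and horizontal forms are prime to products of vertical ones. For such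
  a staircase, the ideals generated by a set of the \<open>e\<^sub>k\<close> and by its complement intersect in the
  ideal generated by \<open>lcm(e\<^sub>i, e\<^sub>i\<^sub>+\<^sub>1) = \<Lambda> p\<^sub>i\<^sub>+\<^sub>1 q\<^sub>i\<close> for the cuts \<open>i\<close> (induction on the first index).
  These lcms are bihomogeneous of pairwise incomparable bidegrees. The coefficients at one
  monomial of each of them are functionals that separate the lcms and, on the ideal, only see the
  constant terms of the coefficients in an ideal combination; so the images of any generating set
  span a space of dimension at least the number of cuts.\<close>

text \<open>The library makes R an integral domain only for linearly ordered variables; any order will do.\<close>

fun var_rank :: "var \<Rightarrow> nat" where
  "var_rank X0 = 0" | "var_rank X1 = 1" | "var_rank Y0 = 2" | "var_rank Y1 = 3"

instantiation var :: linorder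
begin
definition less_eq_var :: "var \<Rightarrow> var \<Rightarrow> bool" where "a \<le> b \<longleftrightarrow> var_rank a \<le> var_rank b"
definition less_var :: "var \<Rightarrow> var \<Rightarrow> bool" where "a < b \<longleftrightarrow> var_rank a < var_rank b"
instance
proof
  show "a = b" if "a \<le> b" "b \<le> a" for a b :: var
    using that by (cases a; cases b) (simp_all add: less_eq_var_def)
qed (auto simp: less_eq_var_def less_var_def)
end

section \<open>Ideals of R\<close>

lemma is_idealD:
  assumes "is_ideal I"
  shows "0 \<in> I" "a \<in> I \<Longrightarrow> b \<in> I \<Longrightarrow> a + b \<in> I" "a \<in> I \<Longrightarrow> c * a \<in> I"
  using assms unfolding is_ideal_def by auto

lemma is_ideal_diff:
  assumes "is_ideal I" "a \<in> I" "b \<in> I"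
  shows "a - b \<in> I"
  using is_idealD(2)[OF assms(1,2) is_idealD(3)[OF assms(1,3), of "-1"]] by simp

lemma is_ideal_sum: "is_ideal I \<Longrightarrow> (\<And>x. x \<in> G \<Longrightarrow> h x \<in> I) \<Longrightarrow> sum h G \<in> I"
  by (induction G rule: infinite_finite_induct) (simp_all add: is_idealD(1,2))

lemma is_ideal_Int: "is_ideal I \<Longrightarrow> is_ideal J \<Longrightarrow> is_ideal (I \<inter> J)"
  unfolding is_ideal_def by auto

lemma is_ideal_multiples: "is_ideal {y. d dvd y}"
  unfolding is_ideal_def by auto

lemma is_ideal_ideal_of: "is_ideal (ideal_of S)"
  unfolding is_ideal_def
proof (intro conjI ballI allI)
  show "0 \<in> ideal_of S"
    unfolding ideal_of_def by (intro CollectI exI[of _ "{}"]) simp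
next
  fix a b assume "a \<in> ideal_of S" "b \<in> ideal_of S"
  then obtain G1 f1 G2 f2 where G1: "finite G1" "G1 \<subseteq> S" "a = (\<Sum>g\<in>G1. f1 g * g)"
    and G2: "finite G2" "G2 \<subseteq> S" "b = (\<Sum>g\<in>G2. f2 g * g)"
    unfolding ideal_of_def by blast
  define f where "f g = (if g \<in> G1 then f1 g else 0) + (if g \<in> G2 then f2 g else 0)" for g
  have "f g * g = (if g \<in> G1 then f1 g * g else 0) + (if g \<in> G2 then f2 g * g else 0)" for g
    unfolding f_def by (simp add: distrib_right)
  then have "(\<Sum>g\<in>G1 \<union> G2. f g * g)
        = (\<Sum>g\<in>G1 \<union> G2. if g \<in> G1 then f1 g * g else 0) + (\<Sum>g\<in>G1 \<union> G2. if g \<in> G2 then f2 g * g else 0)"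
    by (simp only: sum.distrib)
  also have "\<dots> = a + b"
    using G1 G2 by (simp add: sum.If_cases Int_absorb1)
  finally have "a + b = (\<Sum>g\<in>G1 \<union> G2. f g * g)" ..
  moreover have "finite (G1 \<union> G2)" "G1 \<union> G2 \<subseteq> S"
    using G1 G2 by auto
  ultimately show "a + b \<in> ideal_of S"
    unfolding ideal_of_def by (intro CollectI exI[of _ "G1 \<union> G2"] exI[of _ f]) (simp only: simp_thms)
next
  fix a c assume "a \<in> ideal_of S"
  then obtain G f where G: "finite G" "G \<subseteq> S" "a = (\<Sum>g\<in>G. f g * g)"
    unfolding ideal_of_def by blast
  have "c * a = (\<Sum>g\<in>G. (c * f g) * g)"
    unfolding G(3) sum_distrib_left by (simp only: mult.assoc)
  then show "c * a \<in> ideal_of S"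
    unfolding ideal_of_def by (intro CollectI exI[of _ G] exI[of _ "\<lambda>g. c * f g"]) (simp only: G(1,2) simp_thms)
qed

lemmas ideal_of_zero = is_idealD(1)[OF is_ideal_ideal_of]
lemmas ideal_of_add = is_idealD(2)[OF is_ideal_ideal_of]
lemmas ideal_of_mult = is_idealD(3)[OF is_ideal_ideal_of]
lemmas ideal_of_diff = is_ideal_diff[OF is_ideal_ideal_of]

lemma ideal_of_superset: "x \<in> S \<Longrightarrow> x \<in> ideal_of S"
  unfolding ideal_of_def by (intro CollectI exI[of _ "{x}"] exI[of _ "\<lambda>_. 1"]) simp

lemma ideal_of_multiple: "x \<in> S \<Longrightarrow> x dvd y \<Longrightarrow> y \<in> ideal_of S"
  by (metis dvd_def ideal_of_mult ideal_of_superset mult.commute)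

lemma ideal_of_least:
  assumes "is_ideal I" "S \<subseteq> I"
  shows "ideal_of S \<subseteq> I"
proof
  fix x assume "x \<in> ideal_of S"
  then obtain G f where "finite G" "G \<subseteq> S" "x = (\<Sum>g\<in>G. f g * g)"
    unfolding ideal_of_def by blast
  then show "x \<in> I"
    using assms by (simp only:) (intro is_ideal_sum is_idealD(3); blast)
qed

lemma ideal_of_mono: "S \<subseteq> T \<Longrightarrow> ideal_of S \<subseteq> ideal_of T"
  by (meson ideal_of_least ideal_of_superset is_ideal_ideal_of subset_iff)

lemma ideal_of_empty: "ideal_of {} = {0}"
  unfolding ideal_of_def by auto

lemma dvd_ideal_of: "(\<And>x. x \<in> S \<Longrightarrow> d dvd x) \<Longrightarrow> y \<in> ideal_of S \<Longrightarrow> d dvd y"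
  using ideal_of_least[OF is_ideal_multiples, of S d] by auto

lemma ideal_of_insertE:
  assumes "y \<in> ideal_of (insert x S)"
  obtains c z where "z \<in> ideal_of S" "y = c * x + z"
proof -
  let ?I = "{y. \<exists>c. y - c * x \<in> ideal_of S}"
  have "is_ideal ?I"
    unfolding is_ideal_def
  proof (intro conjI ballI allI)
    have "0 - 0 * x \<in> ideal_of S"
      using ideal_of_zero by simp
    then show "0 \<in> ?I" by blast
  next
    fix a b assume "a \<in> ?I" "b \<in> ?I"
    then obtain c1 c2 where "a - c1 * x \<in> ideal_of S" "b - c2 * x \<in> ideal_of S" by blast
    then have "(a - c1 * x) + (b - c2 * x) \<in> ideal_of S"
      by (rule ideal_of_add)
    then have "(a + b) - (c1 + c2) * x \<in> ideal_of S"
      by (simp add: algebra_simps)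
    then show "a + b \<in> ?I" by blast
  next
    fix a c assume "a \<in> ?I"
    then obtain c1 where "a - c1 * x \<in> ideal_of S" by blast
    then have "c * (a - c1 * x) \<in> ideal_of S"
      by (rule ideal_of_mult)
    then have "c * a - (c * c1) * x \<in> ideal_of S"
      by (simp add: algebra_simps)
    then show "c * a \<in> ?I" by blast
  qed
  moreover have "insert x S \<subseteq> ?I"
  proof
    fix w assume "w \<in> insert x S"
    then have "w - (if w \<in> S then 0 else 1) * x \<in> ideal_of S"
      using ideal_of_zero ideal_of_superset by auto
    then show "w \<in> ?I" by blast
  qed
  ultimately have "y \<in> ?I"
    using ideal_of_least assms by blast
  then obtain c where "y - c * x \<in> ideal_of S" by blast
  then show ?thesis
    using that[of "y - c * x" c] by simp
qed


section \<open>Intersections of staircase ideals\<close>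

definition cut_points :: "nat set \<Rightarrow> nat \<Rightarrow> nat \<Rightarrow> nat set" where
  "cut_points S s n = {i. s \<le> i \<and> Suc i < n \<and> (i \<in> S \<longleftrightarrow> Suc i \<notin> S)}"

lemma cut_points_Diff: "S \<subseteq> {s..<n} \<Longrightarrow> cut_points ({s..<n} - S) s n = cut_points S s n"
  unfolding cut_points_def by auto

lemma finite_cut_points: "finite (cut_points S s n)"
  unfolding cut_points_def by (rule finite_subset[of _ "{..<n}"]) auto

locale staircase =
  fixes n :: nat and c :: R and p q :: "nat \<Rightarrow> R"
  assumes p_dvd: "\<And>i j. i \<le> j \<Longrightarrow> j < n \<Longrightarrow> p i dvd p j"
    and q_dvd: "\<And>i j. i \<le> j \<Longrightarrow> j < n \<Longrightarrow> q j dvd q i"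
    and p_dvd_cancel_q: "\<And>i j g. i < n \<Longrightarrow> j < n \<Longrightarrow> p i dvd q j * g \<Longrightarrow> p i dvd g"
    and c_nonzero: "c \<noteq> 0"
begin

definition gen :: "nat \<Rightarrow> R" where
  "gen k = c * p k * q k"

text \<open>The least common multiple of \<open>gen i\<close> and \<open>gen (Suc i)\<close>.\<close>
definition corner :: "nat \<Rightarrow> R" where
  "corner i = c * p (Suc i) * q i"

lemma gen_dvd_corner:
  assumes "Suc i < n"
  shows "gen i dvd corner i" "gen (Suc i) dvd corner i"
  using p_dvd[of i "Suc i"] q_dvd[of i "Suc i"] assms
  unfolding gen_def corner_def by (simp_all add: mult_dvd_mono)

lemma p_Suc_dvd_gen: "Suc s \<le> k \<Longrightarrow> k < n \<Longrightarrow> c * p (Suc s) dvd gen k"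
  unfolding gen_def using p_dvd by (simp add: mult.assoc mult_dvd_mono)

lemma ideal_of_corners_subset:
  assumes "S \<subseteq> {s..<n}"
  shows "ideal_of (corner ` cut_points S s n) \<subseteq> ideal_of (gen ` S) \<inter> ideal_of (gen ` ({s..<n} - S))"
proof (intro ideal_of_least is_ideal_Int is_ideal_ideal_of image_subsetI IntI)
  fix i assume "i \<in> cut_points S s n"
  then have i: "s \<le> i" "Suc i < n" "i \<in> S \<longleftrightarrow> Suc i \<notin> S"
    unfolding cut_points_def by auto
  then have "i \<in> S \<and> Suc i \<in> {s..<n} - S \<or> Suc i \<in> S \<and> i \<in> {s..<n} - S"
    by auto
  then show "corner i \<in> ideal_of (gen ` S)" "corner i \<in> ideal_of (gen ` ({s..<n} - S))"
    using gen_dvd_corner[OF i(2)] by (metis ideal_of_multiple imageI)+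
qed

text \<open>A multiple of \<open>gen s\<close> lying in the ideal of the later generators is a multiple of the
  corner: all later generators are divisible by \<open>c * p (Suc s)\<close>, and \<open>p (Suc s)\<close> is coprime to \<open>q s\<close>.\<close>
lemma corner_dvd:
  assumes sn: "Suc s < n" and a: "a * gen s \<in> ideal_of (gen ` {Suc s..<n})"
  shows "corner s dvd a * gen s"
proof -
  have "c * p (Suc s) dvd a * gen s"
    by (rule dvd_ideal_of[OF _ a]) (auto intro: p_Suc_dvd_gen)
  then obtain t where "a * gen s = c * p (Suc s) * t"
    by (elim dvdE)
  then have "c * (q s * (a * p s)) = c * (p (Suc s) * t)"
    unfolding gen_def by (simp only: ac_simps)
  then have "q s * (a * p s) = p (Suc s) * t"
    by (rule mult_left_cancel[OF c_nonzero, THEN iffD1])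
  then have "p (Suc s) dvd q s * (a * p s)"
    by (rule dvdI)
  then have "p (Suc s) dvd a * p s"
    by (rule p_dvd_cancel_q[OF sn Suc_lessD[OF sn]])
  then have "c * q s * p (Suc s) dvd c * q s * (a * p s)"
    by (rule mult_dvd_mono[OF dvd_refl])
  then show ?thesis
    unfolding gen_def corner_def by (simp only: ac_simps)
qed

lemma Int_ideal_of_gen_step:
  assumes IH: "\<And>S'. S' \<subseteq> {Suc s..<n} \<Longrightarrow>
       ideal_of (gen ` S') \<inter> ideal_of (gen ` ({Suc s..<n} - S')) \<subseteq> ideal_of (corner ` cut_points S' (Suc s) n)"
    and S: "S \<subseteq> {s..<n}" and sS: "s \<in> S" and sn: "Suc s < n"
  shows "ideal_of (gen ` S) \<inter> ideal_of (gen ` ({s..<n} - S)) \<subseteq> ideal_of (corner ` cut_points S s n)"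
proof
  fix f assume f: "f \<in> ideal_of (gen ` S) \<inter> ideal_of (gen ` ({s..<n} - S))"
  define S' where "S' = S - {s}"
  define T where "T = {s..<n} - S"
  have S': "S' \<subseteq> {Suc s..<n}" and T: "T = {Suc s..<n} - S'"
    using S sS unfolding S'_def T_def by (auto simp: Suc_le_eq order_le_less)
  have cuts_mono: "ideal_of (corner ` cut_points S' (Suc s) n) \<subseteq> ideal_of (corner ` cut_points S s n)"
    unfolding S'_def cut_points_def by (intro ideal_of_mono image_mono) auto
  have "gen ` S = insert (gen s) (gen ` S')"
    unfolding S'_def using sS by auto
  then obtain a j where j: "j \<in> ideal_of (gen ` S')" and f_eq: "f = a * gen s + j"
    using f ideal_of_insertE by (metis IntD1)
  have tail: "ideal_of (gen ` S') \<union> ideal_of (gen ` T) \<subseteq> ideal_of (gen ` {Suc s..<n})"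
    using S' unfolding T by (intro Un_least ideal_of_mono image_mono) auto
  have "f - j \<in> ideal_of (gen ` {Suc s..<n})"
    using f j tail unfolding T_def by (intro ideal_of_diff) auto
  then have "corner s dvd a * gen s"
    using corner_dvd[OF sn] f_eq by simp
  then obtain t where t: "a * gen s = t * corner s"
    by (metis dvdE mult.commute)
  show "f \<in> ideal_of (corner ` cut_points S s n)"
  proof (cases "Suc s \<in> S")
    case True
    then have "gen (Suc s) \<in> gen ` S'"
      unfolding S'_def by simp
    then have "corner s \<in> ideal_of (gen ` S')"
      by (rule ideal_of_multiple[OF _ gen_dvd_corner(2)[OF sn]])
    then have "f \<in> ideal_of (gen ` S')"
      unfolding f_eq t by (intro ideal_of_add ideal_of_mult j)
    then show ?thesis
      using f IH[OF S'] cuts_mono unfolding T[symmetric] T_def by blast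
  next
    case False
    then have s_cut: "s \<in> cut_points S s n"
      using sS sn unfolding cut_points_def by auto
    have "gen (Suc s) \<in> gen ` T"
      using False sn unfolding T_def by simp
    then have "corner s \<in> ideal_of (gen ` T)"
      by (rule ideal_of_multiple[OF _ gen_dvd_corner(2)[OF sn]])
    then have "f - t * corner s \<in> ideal_of (gen ` T)"
      using f unfolding T_def by (intro ideal_of_diff ideal_of_mult) auto
    then have "j \<in> ideal_of (gen ` T)"
      unfolding f_eq t by simp
    then have "j \<in> ideal_of (corner ` cut_points S s n)"
      using j IH[OF S'] cuts_mono unfolding T by blast
    moreover have "a * gen s \<in> ideal_of (corner ` cut_points S s n)"
      unfolding t using s_cut by (intro ideal_of_mult ideal_of_superset imageI)
    ultimately show ?thesis
      unfolding f_eq by (rule ideal_of_add[rotated])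
  qed
qed

lemma Int_ideal_of_gen_subset:
  "S \<subseteq> {s..<n} \<Longrightarrow> ideal_of (gen ` S) \<inter> ideal_of (gen ` ({s..<n} - S)) \<subseteq> ideal_of (corner ` cut_points S s n)"
proof (induction "n - s" arbitrary: s S rule: less_induct)
  case less
  show ?case
  proof (cases "Suc s < n")
    case False
    then have "{s..<n} \<subseteq> {s}"
      by auto
    then have "S = {} \<or> {s..<n} - S = {}"
      using less.prems by blast
    then have "ideal_of (gen ` S) = {0} \<or> ideal_of (gen ` ({s..<n} - S)) = {0}"
      by (metis ideal_of_empty image_empty)
    then have "ideal_of (gen ` S) \<inter> ideal_of (gen ` ({s..<n} - S)) \<subseteq> {0}"
      by blast
    then show ?thesis
      using ideal_of_zero by blast
  next
    case True
    have IH: "\<And>S'. S' \<subseteq> {Suc s..<n} \<Longrightarrow>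
       ideal_of (gen ` S') \<inter> ideal_of (gen ` ({Suc s..<n} - S')) \<subseteq> ideal_of (corner ` cut_points S' (Suc s) n)"
      using less.hyps True by auto
    consider "s \<in> S" | "s \<in> {s..<n} - S"
      using True by auto
    then show ?thesis
    proof cases
      case 1
      then show ?thesis using Int_ideal_of_gen_step[OF IH less.prems _ True] by blast
    next
      case 2
      have "{s..<n} - ({s..<n} - S) = S"
        using less.prems by auto
      then show ?thesis
        using Int_ideal_of_gen_step[OF IH _ 2 True] cut_points_Diff[OF less.prems] by auto
    qed
  qed
qed

theorem Int_ideal_of_gen:
  assumes "S \<subseteq> {0..<n}"
  shows "ideal_of (gen ` S) \<inter> ideal_of (gen ` ({0..<n} - S)) = ideal_of (corner ` cut_points S 0 n)"
  using Int_ideal_of_gen_subset[OF assms] ideal_of_corners_subset[OF assms] by blast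

end


section \<open>Linear forms are prime to polynomials in the other variables\<close>

lemma sum_single_lookup: "(\<Sum>\<mu>\<in>Poly_Mapping.keys f. Poly_Mapping.single \<mu> (Poly_Mapping.lookup f \<mu>)) = f"
proof (rule poly_mapping_eqI)
  fix k
  have "Poly_Mapping.lookup (\<Sum>\<mu>\<in>Poly_Mapping.keys f. Poly_Mapping.single \<mu> (Poly_Mapping.lookup f \<mu>)) k
        = (\<Sum>\<mu>\<in>Poly_Mapping.keys f. if k = \<mu> then Poly_Mapping.lookup f \<mu> else 0)"
    by (simp add: lookup_sum lookup_single when_def eq_commute)
  also have "\<dots> = Poly_Mapping.lookup f k"
    by (simp add: in_keys_iff)
  finally show "Poly_Mapping.lookup (\<Sum>\<mu>\<in>Poly_Mapping.keys f. Poly_Mapping.single \<mu> (Poly_Mapping.lookup f \<mu>)) k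
        = Poly_Mapping.lookup f k" .
qed

lemma lookup_single_mult:
  "Poly_Mapping.lookup (Poly_Mapping.single m a * f) (m + k) = a * Poly_Mapping.lookup (f :: R) k"
proof -
  have "Poly_Mapping.single m a * f
        = (\<Sum>\<mu>\<in>Poly_Mapping.keys f. Poly_Mapping.single (m + \<mu>) (a * Poly_Mapping.lookup f \<mu>))"
    by (subst (1) sum_single_lookup[of f, symmetric]) (simp add: sum_distrib_left mult_single)
  then have "Poly_Mapping.lookup (Poly_Mapping.single m a * f) (m + k)
        = (\<Sum>\<mu>\<in>Poly_Mapping.keys f. if k = \<mu> then a * Poly_Mapping.lookup f \<mu> else 0)"
    by (simp add: lookup_sum lookup_single when_def)
  also have "\<dots> = a * Poly_Mapping.lookup f k"
    by (simp add: in_keys_iff)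
  finally show ?thesis .
qed

lemma Var_mult_single:
  "Var v * Poly_Mapping.single \<mu> c = Poly_Mapping.single (Poly_Mapping.single v 1 + \<mu>) c"
  unfolding Var_def by (simp add: mult_single)

lemma R_induct [case_names Const add Var_mult]:
  assumes Const: "\<And>c. P (Const c)"
    and add: "\<And>f g. P f \<Longrightarrow> P g \<Longrightarrow> P (f + g)"
    and Var_mult: "\<And>v f. P f \<Longrightarrow> P (Var v * f)"
  shows "P f"
proof -
  have monomial: "P (Poly_Mapping.single \<mu> c)" for \<mu> c
  proof (induction "Poly_Mapping.lookup \<mu> X0 + Poly_Mapping.lookup \<mu> X1 + Poly_Mapping.lookup \<mu> Y0
      + Poly_Mapping.lookup \<mu> Y1" arbitrary: \<mu> rule: less_induct)
    case less
    show ?case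
    proof (cases "\<mu> = 0")
      case True
      then show ?thesis
        using Const[of c] by (simp add: Const_def)
    next
      case False
      then obtain v where v: "Poly_Mapping.lookup \<mu> v > 0"
        by (metis gr0I lookup_zero poly_mapping_eqI)
      define \<nu> where "\<nu> = \<mu> - Poly_Mapping.single v 1"
      have \<mu>: "\<mu> = Poly_Mapping.single v 1 + \<nu>"
        unfolding \<nu>_def using v
        by (intro poly_mapping_eqI) (auto simp: lookup_add lookup_minus lookup_single when_def)
      have "Poly_Mapping.lookup \<mu> x = Poly_Mapping.lookup \<nu> x + (if x = v then 1 else 0)" for x
        by (subst \<mu>) (simp add: lookup_add lookup_single)
      then have "P (Poly_Mapping.single \<nu> c)"
        by (intro less) (cases v; simp)
      then have "P (Var v * Poly_Mapping.single \<nu> c)"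
        by (rule Var_mult)
      then show ?thesis
        by (simp only: Var_mult_single \<mu>[symmetric])
    qed
  qed
  have zero: "P 0"
    using Const[of 0] by (simp add: Const_def)
  have "P (\<Sum>\<mu>\<in>M. Poly_Mapping.single \<mu> (Poly_Mapping.lookup f \<mu>))" for M
    by (induction M rule: infinite_finite_induct) (simp_all add: zero add monomial)
  then show ?thesis
    by (metis sum_single_lookup)
qed

definition free_of :: "var \<Rightarrow> R \<Rightarrow> bool" where
  "free_of w f \<longleftrightarrow> (\<forall>\<mu>\<in>Poly_Mapping.keys f. Poly_Mapping.lookup \<mu> w = 0)"

lemma free_of_add: "free_of w f \<Longrightarrow> free_of w g \<Longrightarrow> free_of w (f + g)"
  unfolding free_of_def using keys_add[of f g] by auto

lemma free_of_diff: "free_of w f \<Longrightarrow> free_of w g \<Longrightarrow> free_of w (f - g)"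
  unfolding free_of_def using keys_diff[of f g] by auto

lemma free_of_mult: "free_of w f \<Longrightarrow> free_of w g \<Longrightarrow> free_of w (f * g)"
  unfolding free_of_def using keys_mult[of f g] by (fastforce simp: lookup_add)

lemma free_of_Const: "free_of w (Const c)"
  unfolding free_of_def Const_def by simp

lemma free_of_one: "free_of w 1"
  unfolding free_of_def by simp

lemma free_of_Var: "v \<noteq> w \<Longrightarrow> free_of w (Var v)"
  unfolding free_of_def Var_def by (simp add: lookup_single)

lemma free_of_prod_list: "(\<And>x. x \<in> set xs \<Longrightarrow> free_of w (f x)) \<Longrightarrow> free_of w (prod_list (map f xs))"
  by (induction xs) (simp_all add: free_of_one free_of_mult)

definition lin_form :: "var \<Rightarrow> var \<Rightarrow> complex \<Rightarrow> R" where
  "lin_form u w a = Const a * Var u - Var w"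

lemma lin_form_division:
  assumes uw: "u \<noteq> w"
  shows "\<exists>q r. f = lin_form u w a * q + r \<and> free_of w r"
proof (induction f rule: R_induct)
  case (Const c)
  have "Const c = lin_form u w a * 0 + Const c" by simp
  then show ?case using free_of_Const by blast
next
  case (add f g)
  then obtain q1 r1 q2 r2 where "f = lin_form u w a * q1 + r1" "free_of w r1"
    "g = lin_form u w a * q2 + r2" "free_of w r2" by blast
  then have "f + g = lin_form u w a * (q1 + q2) + (r1 + r2) \<and> free_of w (r1 + r2)"
    by (simp add: algebra_simps free_of_add)
  then show ?case by blast
next
  case (Var_mult v f)
  then obtain q r where f: "f = lin_form u w a * q + r" and r: "free_of w r" by blast
  show ?case
  proof (cases "v = w")
    case True
    \<comment> \<open>reduce modulo the form: \<open>w = a u - lin_form u w a\<close>\<close>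
    have "Var v * f = lin_form u w a * (Var w * q - r) + Const a * Var u * r"
      unfolding f True lin_form_def by (simp add: algebra_simps)
    moreover have "free_of w (Const a * Var u * r)"
      using r uw by (simp add: free_of_mult free_of_Const free_of_Var)
    ultimately show ?thesis by blast
  next
    case False
    have "Var v * f = lin_form u w a * (Var v * q) + Var v * r"
      unfolding f by (simp add: algebra_simps)
    moreover have "free_of w (Var v * r)"
      using r False by (simp add: free_of_mult free_of_Var)
    ultimately show ?thesis by blast
  qed
qed

text \<open>Look at a monomial of \<open>q\<close> of maximal degree in \<open>w\<close>: multiplied by \<open>- w\<close> it gives
  a monomial of \<open>lin_form u w a * q\<close> that nothing can cancel.\<close>
lemma lin_form_mult_free_of:
  assumes uw: "u \<noteq> w" and free: "free_of w (lin_form u w a * q)"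
  shows "q = 0"
proof (rule ccontr)
  assume "q \<noteq> 0"
  define D where "D = (\<lambda>\<mu>. Poly_Mapping.lookup \<mu> w) ` Poly_Mapping.keys q"
  have D: "finite D" "D \<noteq> {}"
    unfolding D_def using \<open>q \<noteq> 0\<close> by auto
  obtain \<mu>0 where \<mu>0: "\<mu>0 \<in> Poly_Mapping.keys q" "Poly_Mapping.lookup \<mu>0 w = Max D"
    using Max_in[OF D] unfolding D_def by auto
  have le_Max: "Poly_Mapping.lookup \<mu> w \<le> Max D" if "\<mu> \<in> Poly_Mapping.keys q" for \<mu>
    using D(1) that unfolding D_def by simp
  define \<rho> where "\<rho> = Poly_Mapping.single w 1 + \<mu>0"
  have "Const a * Var u = Poly_Mapping.single (Poly_Mapping.single u 1) a"
    unfolding Const_def Var_def by (simp add: mult_single)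
  then have "Poly_Mapping.keys (Const a * Var u * q) \<subseteq> {Poly_Mapping.single u 1 + \<mu> | \<mu>. \<mu> \<in> Poly_Mapping.keys q}"
    using keys_mult[of "Const a * Var u" q] by (cases "a = 0") auto
  moreover have "\<rho> \<notin> {Poly_Mapping.single u 1 + \<mu> | \<mu>. \<mu> \<in> Poly_Mapping.keys q}"
  proof
    assume "\<rho> \<in> {Poly_Mapping.single u 1 + \<mu> | \<mu>. \<mu> \<in> Poly_Mapping.keys q}"
    then obtain \<mu> where "\<rho> = Poly_Mapping.single u 1 + \<mu>" "\<mu> \<in> Poly_Mapping.keys q"
      by blast
    then have "Poly_Mapping.lookup \<rho> w \<le> Max D"
      using le_Max uw by (simp add: lookup_add lookup_single)
    then show False
      using \<mu>0(2) unfolding \<rho>_def by (simp add: lookup_add)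
  qed
  ultimately have "Poly_Mapping.lookup (Const a * Var u * q) \<rho> = 0"
    by (auto simp: in_keys_iff)
  moreover have "Poly_Mapping.lookup (Var w * q) \<rho> = Poly_Mapping.lookup q \<mu>0"
    unfolding Var_def \<rho>_def by (simp add: lookup_single_mult)
  ultimately have "Poly_Mapping.lookup (lin_form u w a * q) \<rho> = - Poly_Mapping.lookup q \<mu>0"
    unfolding lin_form_def by (simp add: left_diff_distrib lookup_minus)
  then have "\<rho> \<in> Poly_Mapping.keys (lin_form u w a * q)"
    using \<mu>0(1) by (simp add: in_keys_iff)
  then have "Poly_Mapping.lookup \<rho> w = 0"
    using free unfolding free_of_def by blast
  then show False
    unfolding \<rho>_def by (simp add: lookup_add)
qed

lemma lin_form_nonzero: "u \<noteq> w \<Longrightarrow> lin_form u w a \<noteq> 0"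
  using lin_form_mult_free_of[of u w a 1] by (auto simp: free_of_def)

lemma lin_form_dvd_cancel:
  assumes uw: "u \<noteq> w" and V: "free_of w V" "V \<noteq> 0" and dvd: "lin_form u w a dvd V * g"
  shows "lin_form u w a dvd g"
proof -
  obtain q r where g: "g = lin_form u w a * q + r" and r: "free_of w r"
    using lin_form_division[OF uw] by blast
  have "lin_form u w a dvd V * g - lin_form u w a * (V * q)"
    using dvd by (rule dvd_diff) simp
  moreover have "V * g - lin_form u w a * (V * q) = V * r"
    unfolding g by (simp add: algebra_simps)
  ultimately obtain t where t: "V * r = lin_form u w a * t"
    by (metis dvdE)
  have "free_of w (lin_form u w a * t)"
    unfolding t[symmetric] using V(1) r by (rule free_of_mult)
  then have "V * r = 0"
    using lin_form_mult_free_of[OF uw] t by simp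
  then have "r = 0"
    using V(2) by simp
  then show ?thesis
    using g by simp
qed

lemma Hform_lin_form: "Hform (Some a) = lin_form X0 X1 a" "Hform None = - lin_form X1 X0 0"
  by (simp_all add: lin_form_def Const_def)

lemma Vform_lin_form: "Vform (Some b) = lin_form Y0 Y1 b" "Vform None = - lin_form Y1 Y0 0"
  by (simp_all add: lin_form_def Const_def)

lemma Hform_nonzero: "Hform A \<noteq> 0"
  by (cases A) (simp_all add: Hform_lin_form lin_form_nonzero del: Hform.simps)

lemma Vform_nonzero: "Vform B \<noteq> 0"
  by (cases B) (simp_all add: Vform_lin_form lin_form_nonzero del: Vform.simps)

lemma free_of_Vform: "w \<noteq> Y0 \<Longrightarrow> w \<noteq> Y1 \<Longrightarrow> free_of w (Vform B)"
  by (cases B) (simp_all add: free_of_diff free_of_mult free_of_Const free_of_Var)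

lemma Hform_dvd_cancel:
  assumes V: "free_of X0 V" "free_of X1 V" "V \<noteq> 0" and dvd: "Hform A dvd V * g"
  shows "Hform A dvd g"
proof (cases A)
  case None
  then have "lin_form X1 X0 0 dvd V * g"
    using dvd unfolding None Hform_lin_form by (simp only: minus_dvd_iff)
  then have "lin_form X1 X0 0 dvd g"
    using lin_form_dvd_cancel[of X1 X0 V] V(1,3) by blast
  then show ?thesis
    unfolding None Hform_lin_form by (simp only: minus_dvd_iff)
next
  case (Some a)
  have "lin_form X0 X1 a dvd V * g"
    using dvd unfolding Some Hform_lin_form .
  then have "lin_form X0 X1 a dvd g"
    using lin_form_dvd_cancel[of X0 X1 V] V(2,3) by blast
  then show ?thesis
    unfolding Some Hform_lin_form .
qed

lemma prod_Hform_dvd_cancel: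
  assumes V: "free_of X0 V" "free_of X1 V" "V \<noteq> 0"
  shows "prod_list (map Hform As) dvd V * g \<Longrightarrow> prod_list (map Hform As) dvd g"
proof (induction As arbitrary: g)
  case Nil
  then show ?case by simp
next
  case (Cons A As)
  let ?P = "prod_list (map Hform As)"
  obtain t where "V * g = prod_list (map Hform (A # As)) * t"
    using Cons.prems by (rule dvdE)
  then have t: "V * g = Hform A * (?P * t)"
    by (simp only: list.map prod_list.Cons mult.assoc)
  then have "Hform A dvd V * g"
    by (rule dvdI)
  then have "Hform A dvd g"
    by (rule Hform_dvd_cancel[OF V])
  then obtain g1 where g1: "g = Hform A * g1"
    by (rule dvdE)
  then have "Hform A * (V * g1) = Hform A * (?P * t)"
    using t by (simp only: ac_simps)
  then have "V * g1 = ?P * t"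
    by (rule mult_left_cancel[OF Hform_nonzero, THEN iffD1])
  then have "?P dvd V * g1"
    by (rule dvdI)
  then have "?P dvd g1"
    by (rule Cons.IH)
  then show ?case
    unfolding g1 by (simp only: list.map prod_list.Cons) (rule mult_dvd_mono[OF dvd_refl])
qed


section \<open>Lower bound for generators of bidegree-incomparable elements\<close>

definition xdeg :: "(var \<Rightarrow>\<^sub>0 nat) \<Rightarrow> nat" where
  "xdeg \<mu> = Poly_Mapping.lookup \<mu> X0 + Poly_Mapping.lookup \<mu> X1"

definition ydeg :: "(var \<Rightarrow>\<^sub>0 nat) \<Rightarrow> nat" where
  "ydeg \<mu> = Poly_Mapping.lookup \<mu> Y0 + Poly_Mapping.lookup \<mu> Y1"

lemma xdeg_add: "xdeg (\<mu> + \<nu>) = xdeg \<mu> + xdeg \<nu>"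
  unfolding xdeg_def by (simp add: lookup_add)

lemma ydeg_add: "ydeg (\<mu> + \<nu>) = ydeg \<mu> + ydeg \<nu>"
  unfolding ydeg_def by (simp add: lookup_add)

lemma xdeg_ydeg_eq_0: "xdeg \<mu> = 0 \<Longrightarrow> ydeg \<mu> = 0 \<Longrightarrow> \<mu> = 0"
  unfolding xdeg_def ydeg_def by (intro poly_mapping_eqI) (case_tac k; simp)

definition bihom :: "nat \<Rightarrow> nat \<Rightarrow> R \<Rightarrow> bool" where
  "bihom d e f \<longleftrightarrow> (\<forall>\<mu>\<in>Poly_Mapping.keys f. xdeg \<mu> = d \<and> ydeg \<mu> = e)"

lemma bihom_one: "bihom 0 0 1"
  unfolding bihom_def xdeg_def ydeg_def by simp

lemma bihom_mult: "bihom d e f \<Longrightarrow> bihom d' e' g \<Longrightarrow> bihom (d + d') (e + e') (f * g)"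
  unfolding bihom_def using keys_mult[of f g] by (fastforce simp: xdeg_add ydeg_add)

lemma bihom_diff: "bihom d e f \<Longrightarrow> bihom d e g \<Longrightarrow> bihom d e (f - g)"
  unfolding bihom_def using keys_diff[of f g] by blast

lemma bihom_Const_mult_Var:
  "bihom (xdeg (Poly_Mapping.single v 1)) (ydeg (Poly_Mapping.single v 1)) (Const a * Var v)"
  unfolding bihom_def Const_def Var_def by (simp add: mult_single)

lemma bihom_Var: "bihom (xdeg (Poly_Mapping.single v 1)) (ydeg (Poly_Mapping.single v 1)) (Var v)"
  using bihom_Const_mult_Var[of v 1] by (simp add: Const_def)

lemma bihom_Hform: "bihom 1 0 (Hform A)"
proof -
  have "bihom 1 0 (Const a * Var X0)" "bihom 1 0 (Var X0)" "bihom 1 0 (Var X1)" for a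
    using bihom_Const_mult_Var[of X0 a] bihom_Var[of X0] bihom_Var[of X1]
    by (simp_all add: xdeg_def ydeg_def lookup_single)
  then show ?thesis
    by (cases A) (simp_all only: Hform.simps bihom_diff)
qed

lemma bihom_Vform: "bihom 0 1 (Vform B)"
proof -
  have "bihom 0 1 (Const b * Var Y0)" "bihom 0 1 (Var Y0)" "bihom 0 1 (Var Y1)" for b
    using bihom_Const_mult_Var[of Y0 b] bihom_Var[of Y0] bihom_Var[of Y1]
    by (simp_all add: xdeg_def ydeg_def lookup_single)
  then show ?thesis
    by (cases B) (simp_all only: Vform.simps bihom_diff)
qed

lemma bihom_prod_list:
  "(\<And>x. x \<in> set xs \<Longrightarrow> bihom d e (f x)) \<Longrightarrow> bihom (length xs * d) (length xs * e) (prod_list (map f xs))"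
  by (induction xs) (simp_all add: bihom_one bihom_mult)

lemma bihom_prod:
  "finite A \<Longrightarrow> (\<And>x. x \<in> A \<Longrightarrow> bihom d e (f x)) \<Longrightarrow> bihom (card A * d) (card A * e) (\<Prod>x\<in>A. f x)"
proof (induction A rule: finite_induct)
  case empty
  then show ?case using bihom_one by simp
next
  case (insert x A)
  have "bihom d e (f x)"
    by (rule insert.prems) simp
  moreover have "bihom (card A * d) (card A * e) (\<Prod>x\<in>A. f x)"
    by (rule insert.IH, rule insert.prems) simp
  ultimately have "bihom (d + card A * d) (e + card A * e) (f x * (\<Prod>x\<in>A. f x))"
    by (rule bihom_mult)
  then show ?case
    unfolding prod.insert[OF insert.hyps] card_insert_disjoint[OF insert.hyps] mult_Suc .
qed

definition cmult :: "complex \<Rightarrow> R \<Rightarrow> R" where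
  "cmult a f = Const a * f"

lemma Const_add: "Const (a + b) = Const a + Const b"
  unfolding Const_def by (simp add: single_add)

lemma Const_mult: "Const (a * b) = Const a * Const b"
  unfolding Const_def by (simp add: mult_single)

interpretation R_space: vector_space cmult
  by unfold_locales (simp_all add: cmult_def Const_add Const_mult algebra_simps, simp add: Const_def)

lemma lookup_cmult: "Poly_Mapping.lookup (cmult a f) \<mu> = a * Poly_Mapping.lookup f \<mu>"
  using lookup_single_mult[of 0 a f \<mu>] by (simp add: cmult_def Const_def)

lemma independent_singles:
  assumes inj: "inj_on \<kappa> C" and nonzero: "\<And>i. i \<in> C \<Longrightarrow> c i \<noteq> 0"
  shows "R_space.independent ((\<lambda>i. Poly_Mapping.single (\<kappa> i) (c i)) ` C)"
  unfolding R_space.dependent_explicit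
proof clarify
  fix T u v0
  assume T: "finite T" "T \<subseteq> (\<lambda>i. Poly_Mapping.single (\<kappa> i) (c i)) ` C"
    and sum: "(\<Sum>v\<in>T. cmult (u v) v) = 0" and v0: "v0 \<in> T" "u v0 \<noteq> 0"
  obtain j where j: "j \<in> C" "v0 = Poly_Mapping.single (\<kappa> j) (c j)"
    using T(2) v0(1) by blast
  have "Poly_Mapping.lookup v (\<kappa> j) = (if v = v0 then c j else 0)" if "v \<in> T" for v
  proof -
    obtain i where i: "i \<in> C" "v = Poly_Mapping.single (\<kappa> i) (c i)"
      using T(2) \<open>v \<in> T\<close> by blast
    show ?thesis
    proof (cases "i = j")
      case True
      then show ?thesis using i j by simp
    next
      case False
      then have "\<kappa> i \<noteq> \<kappa> j"
        using inj i(1) j(1) by (auto dest: inj_onD)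
      moreover have "Poly_Mapping.lookup v (\<kappa> i) \<noteq> Poly_Mapping.lookup v0 (\<kappa> i)"
        using calculation nonzero[OF i(1)] i(2) j(2) by (simp add: lookup_single_not_eq)
      ultimately show ?thesis
        using i(2) by (auto simp: lookup_single_not_eq)
    qed
  qed
  then have "(\<Sum>v\<in>T. u v * Poly_Mapping.lookup v (\<kappa> j)) = (\<Sum>v\<in>T. if v = v0 then u v0 * c j else 0)"
    by (intro sum.cong) auto
  then have "Poly_Mapping.lookup (\<Sum>v\<in>T. cmult (u v) v) (\<kappa> j) = u v0 * c j"
    using T(1) v0(1) by (simp add: lookup_sum lookup_cmult)
  then show False
    using sum v0(2) nonzero[OF j(1)] by simp
qed

lemma min_gens_eqI:
  assumes "finite G0" "ideal_of G0 = I" "\<And>G. finite G \<Longrightarrow> ideal_of G = I \<Longrightarrow> card G0 \<le> card G"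
  shows "min_gens I = card G0"
  unfolding min_gens_def using assms by (intro Least_equality) auto

locale incomparable_generators =
  fixes C :: "nat set" and m :: "nat \<Rightarrow> R" and \<alpha> \<beta> :: "nat \<Rightarrow> nat"
  assumes finite_C: "finite C"
    and m_nonzero: "\<And>i. i \<in> C \<Longrightarrow> m i \<noteq> 0"
    and m_bihom: "\<And>i. i \<in> C \<Longrightarrow> bihom (\<alpha> i) (\<beta> i) (m i)"
    and incomparable: "\<And>i j. i \<in> C \<Longrightarrow> j \<in> C \<Longrightarrow> \<alpha> i \<le> \<alpha> j \<Longrightarrow> \<beta> i \<le> \<beta> j \<Longrightarrow> i = j"
begin

definition monomial :: "nat \<Rightarrow> (var \<Rightarrow>\<^sub>0 nat)" where
  "monomial i = (SOME \<mu>. \<mu> \<in> Poly_Mapping.keys (m i))"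

lemma monomial_in_keys: "i \<in> C \<Longrightarrow> monomial i \<in> Poly_Mapping.keys (m i)"
  unfolding monomial_def using m_nonzero[of i] by (metis ex_in_conv keys_eq_empty someI_ex)

lemma bideg_monomial: "i \<in> C \<Longrightarrow> xdeg (monomial i) = \<alpha> i \<and> ydeg (monomial i) = \<beta> i"
  using monomial_in_keys m_bihom unfolding bihom_def by blast

lemma monomial_notin_keys: "i \<in> C \<Longrightarrow> j \<in> C \<Longrightarrow> i \<noteq> j \<Longrightarrow> monomial j \<notin> Poly_Mapping.keys (m i)"
  using bideg_monomial incomparable m_bihom unfolding bihom_def by (metis order_refl)

lemma inj_on_monomial: "inj_on monomial C"
  by (rule inj_onI) (metis monomial_in_keys monomial_notin_keys)

definition supported_above :: "R \<Rightarrow> bool" where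
  "supported_above f \<longleftrightarrow> (\<forall>\<sigma>\<in>Poly_Mapping.keys f. \<exists>i\<in>C. \<alpha> i \<le> xdeg \<sigma> \<and> \<beta> i \<le> ydeg \<sigma>)"

lemma is_ideal_supported_above: "is_ideal {f. supported_above f}"
  unfolding is_ideal_def
proof (intro conjI ballI allI)
  show "0 \<in> {f. supported_above f}"
    unfolding supported_above_def by simp
next
  fix f g assume "f \<in> {f. supported_above f}" "g \<in> {f. supported_above f}"
  moreover have "Poly_Mapping.keys (f + g) \<subseteq> Poly_Mapping.keys f \<union> Poly_Mapping.keys g"
    by (rule keys_add)
  ultimately show "f + g \<in> {f. supported_above f}"
    unfolding supported_above_def mem_Collect_eq by blast
next
  fix f a assume f: "f \<in> {f. supported_above f}"
  show "a * f \<in> {f. supported_above f}"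
    unfolding supported_above_def mem_Collect_eq
  proof
    fix \<sigma> assume "\<sigma> \<in> Poly_Mapping.keys (a * f)"
    then obtain x y where xy: "y \<in> Poly_Mapping.keys f" "\<sigma> = x + y"
      using keys_mult[of a f] by blast
    then obtain i where i: "i \<in> C" "\<alpha> i \<le> xdeg y" "\<beta> i \<le> ydeg y"
      using f unfolding supported_above_def by blast
    then have "\<alpha> i \<le> xdeg \<sigma>" "\<beta> i \<le> ydeg \<sigma>"
      using xy(2) by (simp_all add: xdeg_add ydeg_add)
    then show "\<exists>i\<in>C. \<alpha> i \<le> xdeg \<sigma> \<and> \<beta> i \<le> ydeg \<sigma>"
      using i(1) by blast
  qed
qed

lemma supported_above_ideal_of: "g \<in> ideal_of (m ` C) \<Longrightarrow> supported_above g"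
  using ideal_of_least[OF is_ideal_supported_above, of "m ` C"] m_bihom unfolding supported_above_def bihom_def by fastforce

text \<open>Within the ideal, the coefficient of \<open>monomial j\<close> in \<open>f * g\<close> only sees the constant term of \<open>f\<close>:
  a monomial of \<open>g\<close> dividing \<open>monomial j\<close> must have bidegree exactly \<open>(\<alpha> j, \<beta> j)\<close>.\<close>
lemma lookup_mult_supported_above:
  assumes g: "supported_above g" and j: "j \<in> C"
  shows "Poly_Mapping.lookup (f * g) (monomial j) = Poly_Mapping.lookup f 0 * Poly_Mapping.lookup g (monomial j)"
proof -
  define c where "c = Poly_Mapping.lookup f 0"
  define f' where "f' = f - Poly_Mapping.single 0 c"
  have "monomial j \<notin> Poly_Mapping.keys (f' * g)"
  proof
    assume "monomial j \<in> Poly_Mapping.keys (f' * g)"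
    then obtain x y where xy: "x \<in> Poly_Mapping.keys f'" "y \<in> Poly_Mapping.keys g" "monomial j = x + y"
      using keys_mult[of f' g] by blast
    then obtain i where i: "i \<in> C" "\<alpha> i \<le> xdeg y" "\<beta> i \<le> ydeg y"
      using g unfolding supported_above_def by blast
    have deg: "xdeg x + xdeg y = \<alpha> j" "ydeg x + ydeg y = \<beta> j"
      using bideg_monomial[OF j] xy(3) by (simp_all add: xdeg_add ydeg_add)
    then have "i = j"
      using incomparable[OF i(1) j] i(2,3) by linarith
    then have "x = 0"
      using deg i(2,3) by (intro xdeg_ydeg_eq_0) simp_all
    then show False
      using xy(1) unfolding f'_def c_def by (simp add: in_keys_iff lookup_minus)
  qed
  then have "Poly_Mapping.lookup (f' * g) (monomial j) = 0"
    by (simp add: in_keys_iff)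
  moreover have "f * g = Poly_Mapping.single 0 c * g + f' * g"
    unfolding f'_def by (simp add: algebra_simps)
  moreover have "Poly_Mapping.lookup (Poly_Mapping.single 0 c * g) (monomial j) = c * Poly_Mapping.lookup g (monomial j)"
    using lookup_single_mult[of 0 c g "monomial j"] by simp
  ultimately show ?thesis
    unfolding c_def by (simp only: lookup_add add_0_right)
qed

definition proj :: "R \<Rightarrow> R" where
  "proj f = (\<Sum>j\<in>C. Poly_Mapping.single (monomial j) (Poly_Mapping.lookup f (monomial j)))"

lemma proj_add: "proj (f + g) = proj f + proj g"
  unfolding proj_def by (simp add: lookup_add single_add sum.distrib)

lemma proj_zero: "proj 0 = 0"
  unfolding proj_def by simp

lemma proj_sum: "proj (sum h A) = (\<Sum>x\<in>A. proj (h x))"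
  by (induction A rule: infinite_finite_induct) (simp_all add: proj_add proj_zero)

lemma proj_mult: "supported_above g \<Longrightarrow> proj (f * g) = cmult (Poly_Mapping.lookup f 0) (proj g)"
  unfolding proj_def cmult_def Const_def
  by (simp add: lookup_mult_supported_above sum_distrib_left mult_single)

lemma proj_m:
  assumes i: "i \<in> C"
  shows "proj (m i) = Poly_Mapping.single (monomial i) (Poly_Mapping.lookup (m i) (monomial i))"
proof -
  have "proj (m i) = (\<Sum>j\<in>C. if j = i then Poly_Mapping.single (monomial i) (Poly_Mapping.lookup (m i) (monomial i)) else 0)"
    unfolding proj_def using monomial_notin_keys[OF i] by (intro sum.cong) (auto simp: in_keys_iff)
  then show ?thesis
    using i finite_C by simp
qed

theorem card_le_generators:
  assumes G: "finite G" "ideal_of G = ideal_of (m ` C)"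
  shows "card C \<le> card G"
proof -
  define T where "T = (\<lambda>i. proj (m i)) ` C"
  have T: "T = (\<lambda>i. Poly_Mapping.single (monomial i) (Poly_Mapping.lookup (m i) (monomial i))) ` C"
    unfolding T_def by (rule image_cong[OF refl proj_m])
  have coeff_nonzero: "Poly_Mapping.lookup (m i) (monomial i) \<noteq> 0" if "i \<in> C" for i
    using monomial_in_keys[OF that] by (simp add: in_keys_iff)
  have inj: "inj_on (\<lambda>i. proj (m i)) C"
  proof (rule inj_onI)
    fix i j assume ij: "i \<in> C" "j \<in> C" "proj (m i) = proj (m j)"
    have "Poly_Mapping.lookup (proj (m i)) (monomial i) \<noteq> 0"
      unfolding proj_m[OF ij(1)] using coeff_nonzero[OF ij(1)] by simp
    then have "Poly_Mapping.lookup (proj (m j)) (monomial i) \<noteq> 0"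
      unfolding ij(3) .
    then have "monomial j = monomial i"
      using proj_m[OF ij(2)] by (simp add: lookup_single when_def split: if_splits)
    then show "i = j"
      using inj_on_monomial ij(1,2) by (auto dest: inj_onD)
  qed
  have span: "T \<subseteq> R_space.span (proj ` G)"
  proof
    fix t assume "t \<in> T"
    then obtain i where i: "i \<in> C" "t = proj (m i)"
      unfolding T_def by blast
    then have "m i \<in> ideal_of G"
      unfolding G(2) by (intro ideal_of_superset imageI)
    then obtain G' f where G': "finite G'" "G' \<subseteq> G" "m i = (\<Sum>g\<in>G'. f g * g)"
      unfolding ideal_of_def by blast
    have "\<And>g. g \<in> G' \<Longrightarrow> supported_above g"
      using G'(2) G(2) supported_above_ideal_of ideal_of_superset by blast
    then have "t = (\<Sum>g\<in>G'. cmult (Poly_Mapping.lookup (f g) 0) (proj g))"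
      unfolding i(2) G'(3) proj_sum by (intro sum.cong refl proj_mult)
    also have "\<dots> \<in> R_space.span (proj ` G)"
      using G'(2) by (intro R_space.span_sum R_space.span_scale R_space.span_base) auto
    finally show "t \<in> R_space.span (proj ` G)" .
  qed
  have "R_space.independent T"
    unfolding T by (rule independent_singles[OF inj_on_monomial coeff_nonzero])
  then have "card T \<le> card (proj ` G)"
    using R_space.independent_span_bound[OF finite_imageI[OF G(1)] _ span] by blast
  also have "\<dots> \<le> card G"
    using G(1) by (rule card_image_le)
  finally show ?thesis
    unfolding T_def using card_image[OF inj] by simp
qed

theorem min_gens_ideal_of: "min_gens (ideal_of (m ` C)) = card C"
proof -
  have "card C \<le> card (m ` C)"
    using finite_C by (intro card_le_generators) auto
  then have "card (m ` C) = card C"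
    using card_image_le[OF finite_C, of m] by simp
  then show ?thesis
    using finite_C card_le_generators by (intro min_gens_eqI[of "m ` C", THEN trans]) auto
qed

end


section \<open>The standard generators of a union of lines and points\<close>

lemma (in staircase) min_gens_Int_ideal_of:
  assumes tau: "tau = map gen [0..<n]" and A: "A \<subseteq> set tau"
    and corner_nonzero: "\<And>i. Suc i < n \<Longrightarrow> corner i \<noteq> 0"
    and corner_bihom: "\<And>i. Suc i < n \<Longrightarrow> bihom (\<alpha> i) (\<beta> i) (corner i)"
    and \<alpha>: "\<And>i j. i < j \<Longrightarrow> Suc j < n \<Longrightarrow> \<alpha> i < \<alpha> j"
    and \<beta>: "\<And>i j. i < j \<Longrightarrow> Suc j < n \<Longrightarrow> \<beta> j < \<beta> i"
  shows "min_gens (ideal_of A \<inter> ideal_of (set tau - A)) = cuts tau A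
         \<and> (cuts tau A = 0 \<longrightarrow> ideal_of A \<inter> ideal_of (set tau - A) = {0})"
proof -
  define S where "S = {k. k < n \<and> gen k \<in> A}"
  define C where "C = cut_points S 0 n"
  have set_tau: "set tau = gen ` {0..<n}"
    unfolding tau by auto
  have "A = gen ` S" "set tau - A = gen ` ({0..<n} - S)"
    using A unfolding S_def set_tau by auto
  then have "ideal_of A \<inter> ideal_of (set tau - A) = ideal_of (gen ` S) \<inter> ideal_of (gen ` ({0..<n} - S))"
    by simp
  also have "\<dots> = ideal_of (corner ` C)"
    unfolding C_def by (rule Int_ideal_of_gen) (auto simp: S_def)
  finally have I: "ideal_of A \<inter> ideal_of (set tau - A) = ideal_of (corner ` C)" .
  have "{i. Suc i < length tau \<and> (tau ! i \<in> A) \<noteq> (tau ! Suc i \<in> A)} = C"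
    unfolding C_def cut_points_def S_def tau by auto
  then have cuts: "cuts tau A = card C"
    unfolding cuts_def by simp
  have C_lt: "i \<in> C \<Longrightarrow> Suc i < n" for i
    unfolding C_def cut_points_def by simp
  interpret incomparable_generators C corner \<alpha> \<beta>
  proof
    show "finite C"
      unfolding C_def by (rule finite_cut_points)
    show "corner i \<noteq> 0" "bihom (\<alpha> i) (\<beta> i) (corner i)" if "i \<in> C" for i
      using C_lt[OF that] corner_nonzero corner_bihom by auto
    show "i = j" if "i \<in> C" "j \<in> C" "\<alpha> i \<le> \<alpha> j" "\<beta> i \<le> \<beta> j" for i j
      using \<alpha>[of j i] \<beta>[of i j] C_lt[OF that(1)] C_lt[OF that(2)] that(3,4)
      by (cases i j rule: linorder_cases) auto
  qed
  have "card C = 0 \<Longrightarrow> ideal_of (corner ` C) = {0}"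
    using finite_C by (simp add: ideal_of_empty)
  then show ?thesis
    unfolding I cuts using min_gens_ideal_of by simp
qed

lemma map2_eq_map_nth:
  "length ys = length xs \<Longrightarrow> map2 f xs ys = map (\<lambda>k. f (xs ! k) (ys ! k)) [0..<length xs]"
  by (rule nth_equalityI) simp_all

lemma prod_list_take_dvd:
  "j \<le> k \<Longrightarrow> prod_list (map f (take j xs)) dvd prod_list (map (f :: _ \<Rightarrow> R) (take k xs))"
  by (metis append_take_drop_id dvd_triv_left map_append min.absorb1 prod_list.append take_take)

lemma prod_list_map_nonzero: "(\<And>x. f x \<noteq> 0) \<Longrightarrow> prod_list (map f xs) \<noteq> (0 :: R)"
  by (induction xs) simp_all

lemma Lambda_nonzero: "finite Hs \<Longrightarrow> finite Vs \<Longrightarrow> Lambda Hs Vs \<noteq> 0"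
  unfolding Lambda_def by (simp add: Hform_nonzero Vform_nonzero)

lemma bihom_Lambda: "finite Hs \<Longrightarrow> finite Vs \<Longrightarrow> bihom (card Hs) (card Vs) (Lambda Hs Vs)"
  unfolding Lambda_def
  using bihom_mult[OF bihom_prod[of Hs 1 0 Hform] bihom_prod[of Vs 0 1 Vform]] bihom_Hform bihom_Vform
  by simp

lemma min_gens_Int_staircase:
  fixes as bs :: "nat list"
  assumes fin: "finite Hs" "finite Vs"
    and len: "length bs = length as"
    and as: "sorted_wrt (<) as" "\<forall>a\<in>set as. a \<le> length As"
    and bs: "sorted_wrt (>) bs" "\<forall>b\<in>set bs. b \<le> length Bs"
    and tau: "tau = map2 (\<lambda>a b. Lambda Hs Vs * prod_list (map Hform (take a As))
                                          * prod_list (map Vform (take b Bs))) as bs"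
    and A: "A \<subseteq> set tau"
  shows "min_gens (ideal_of A \<inter> ideal_of (set tau - A)) = cuts tau A
         \<and> (cuts tau A = 0 \<longrightarrow> ideal_of A \<inter> ideal_of (set tau - A) = {0})"
proof -
  define P where "P k = prod_list (map Hform (take (as ! k) As))" for k
  define Q where "Q k = prod_list (map Vform (take (bs ! k) Bs))" for k
  have as_mono: "as ! i \<le> as ! j" if "i \<le> j" "j < length as" for i j
    using sorted_wrt_nth_less[OF as(1), of i j] that by (cases "i = j") auto
  have bs_mono: "bs ! j \<le> bs ! i" if "i \<le> j" "j < length as" for i j
    using sorted_wrt_nth_less[OF bs(1), of i j] that len by (cases "i = j") auto
  interpret staircase "length as" "Lambda Hs Vs" P Q
  proof
    show "P i dvd P j" if "i \<le> j" "j < length as" for i j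
      unfolding P_def using as_mono[OF that] by (rule prod_list_take_dvd)
    show "Q j dvd Q i" if "i \<le> j" "j < length as" for i j
      unfolding Q_def using bs_mono[OF that] by (rule prod_list_take_dvd)
    show "P i dvd g" if "P i dvd Q j * g" for i j g
    proof -
      have "free_of w (Q j)" if "w = X0 \<or> w = X1" for w
        unfolding Q_def using that by (intro free_of_prod_list free_of_Vform) auto
      moreover have "Q j \<noteq> 0"
        unfolding Q_def using Vform_nonzero by (rule prod_list_map_nonzero)
      ultimately show ?thesis
        using prod_Hform_dvd_cancel[of "Q j"] that unfolding P_def by blast
    qed
    show "Lambda Hs Vs \<noteq> 0"
      using fin by (rule Lambda_nonzero)
  qed
  show ?thesis
  proof (rule min_gens_Int_ideal_of[where \<alpha> = "\<lambda>i. card Hs + as ! Suc i" and \<beta> = "\<lambda>i. card Vs + bs ! i"])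
    show "tau = map gen [0..<length as]"
      unfolding tau map2_eq_map_nth[OF len] by (simp add: gen_def P_def Q_def)
    show "corner i \<noteq> 0" for i
      unfolding corner_def P_def Q_def
      using Lambda_nonzero[OF fin] prod_list_map_nonzero[of Hform, OF Hform_nonzero] prod_list_map_nonzero[of Vform, OF Vform_nonzero]
      by simp
    show "bihom (card Hs + as ! Suc i) (card Vs + bs ! i) (corner i)" if "Suc i < length as" for i
    proof -
      have "as ! Suc i \<le> length As" "bs ! i \<le> length Bs"
        using as(2) bs(2) len that by (simp_all add: nth_mem)
      then show ?thesis
        using bihom_mult[OF bihom_mult[OF bihom_Lambda[OF fin]
              bihom_prod_list[of "take (as ! Suc i) As" 1 0 Hform, OF bihom_Hform]]
            bihom_prod_list[of "take (bs ! i) Bs" 0 1 Vform, OF bihom_Vform]]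
        unfolding corner_def P_def Q_def by (simp add: min_absorb2)
    qed
    show "card Hs + as ! Suc i < card Hs + as ! Suc j" if "i < j" "Suc j < length as" for i j
      using sorted_wrt_nth_less[OF as(1), of "Suc i" "Suc j"] that by simp
    show "card Vs + bs ! j < card Vs + bs ! i" if "i < j" "Suc j < length as" for i j
      using sorted_wrt_nth_less[OF bs(1), of i j] that len by simp
  qed (rule A)
qed

lemma good_labellingD:
  assumes "good_labelling X As Bs"
  shows "set As = fst ` X" "sorted_wrt (\<lambda>a b. alpha X a \<ge> alpha X b) As"
    "distinct Bs" "set Bs = snd ` X"
  using assms unfolding good_labelling_def by auto

lemma alpha_le_length:
  assumes "good_labelling X As Bs" "finite X"
  shows "alpha X A \<le> length Bs"
proof -
  have "inj_on snd {P \<in> X. fst P = A}"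
    by (auto intro: inj_onI simp: prod_eq_iff)
  then have "card {P \<in> X. fst P = A} \<le> card (snd ` X)"
    using assms(2) by (intro card_inj_on_le) auto
  then show ?thesis
    using good_labellingD[OF assms(1)] distinct_card unfolding alpha_def by metis
qed

lemma alpha_pos: "A \<in> fst ` X \<Longrightarrow> finite X \<Longrightarrow> alpha X A > 0"
  unfolding alpha_def by (auto simp: card_gt_0_iff)

lemma std_gens_staircase:
  assumes gl: "good_labelling X As Bs" and fX: "finite X"
  obtains as bs :: "nat list"
  where "length bs = length as"
    and "sorted_wrt (<) as" "\<forall>a\<in>set as. a \<le> length As"
    and "sorted_wrt (>) bs" "\<forall>b\<in>set bs. b \<le> length Bs"
    and "std_gens X Hs Vs As Bs = map2 (\<lambda>a b. Lambda Hs Vs * prod_list (map Hform (take a As))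
                                          * prod_list (map Vform (take b Bs))) as bs"
proof (cases "X = {}")
  case True
  then show ?thesis
    by (intro that[of "[0]" "[0]"]) (simp_all add: std_gens_def)
next
  case False
  define al where "al i = alpha X (As ! i)" for i
  define D where "D = filter (\<lambda>i. al i < al (i - 1)) [1..<length As]"
  have D: "1 \<le> d \<and> d < length As \<and> al d < al (d - 1)" if "d \<in> set D" for d
    using that unfolding D_def by auto
  have "sorted_wrt (<) D"
    unfolding D_def by (intro sorted_wrt_filter) (simp add: sorted_wrt_upt)
  have al_le: "al i \<le> length Bs" for i
    unfolding al_def using alpha_le_length[OF gl fX] .
  have al_pos: "i < length As \<Longrightarrow> al i > 0" for i
    unfolding al_def using good_labellingD(1)[OF gl] fX by (intro alpha_pos) (auto dest: nth_mem)
  have al_antimono: "al j \<le> al i" if "i \<le> j" "j < length As" for i j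
    using sorted_wrt_nth_less[OF good_labellingD(2)[OF gl], of i j] that
    unfolding al_def by (cases "i = j") auto
  have "al d' < al d" if "d \<in> set D" "d' \<in> set D" "d < d'" for d d'
    using D[OF that(2)] al_antimono[of d "d' - 1"] that(3) by linarith
  then have "sorted_wrt (\<lambda>d d'. al d' < al d) D"
    using \<open>sorted_wrt (<) D\<close> by (rule sorted_wrt_mono_rel)
  have "As \<noteq> []" "Bs \<noteq> []"
    using good_labellingD(1,4)[OF gl] False by auto
  show ?thesis
  proof (intro that[where as = "0 # D @ [length As]" and bs = "length Bs # map al D @ [0]"])
    show "sorted_wrt (<) (0 # D @ [length As])"
      using \<open>sorted_wrt (<) D\<close> \<open>As \<noteq> []\<close> by (auto simp: sorted_wrt_append dest: D)
    show "sorted_wrt (>) (length Bs # map al D @ [0])"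
      using \<open>sorted_wrt (\<lambda>d d'. al d' < al d) D\<close> D al_pos al_le \<open>Bs \<noteq> []\<close>
      by (fastforce simp: sorted_wrt_append sorted_wrt_map intro: order.strict_trans2)
    show "std_gens X Hs Vs As Bs = map2 (\<lambda>a b. Lambda Hs Vs * prod_list (map Hform (take a As))
            * prod_list (map Vform (take b Bs))) (0 # D @ [length As]) (length Bs # map al D @ [0])"
      using False unfolding std_gens_def Let_def D_def al_def by (simp add: zip_map2 zip_same_conv_map)
    show "\<forall>a\<in>set (0 # D @ [length As]). a \<le> length As"
      using D by fastforce
    show "\<forall>b\<in>set (length Bs # map al D @ [0]). b \<le> length Bs"
      using al_le by auto
  qed simp
qed

theorem theorem5p7:
  fixes X :: "(P1 \<times> P1) set" and Hs Vs :: "P1 set" and As Bs :: "P1 list"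
    and A :: "R set" and r :: nat
  assumes "union_lines_points X Hs Vs"
    and "ACM X"
    and "good_labelling X As Bs"
    and "A \<subseteq> set (std_gens X Hs Vs As Bs)"
    and "r = cuts (std_gens X Hs Vs As Bs) A"
  shows "min_gens (ideal_of A \<inter> ideal_of (set (std_gens X Hs Vs As Bs) - A)) = r
         \<and> (r = 0 \<longrightarrow> ideal_of A \<inter> ideal_of (set (std_gens X Hs Vs As Bs) - A) = {0})"
proof -
  have fin: "finite X" "finite Hs" "finite Vs"
    using assms(1) unfolding union_lines_points_def by auto
  obtain as bs where staircase: "length bs = length as"
    "sorted_wrt (<) as" "\<forall>a\<in>set as. a \<le> length As"
    "sorted_wrt (>) bs" "\<forall>b\<in>set bs. b \<le> length Bs"
    "std_gens X Hs Vs As Bs = map2 (\<lambda>a b. Lambda Hs Vs * prod_list (map Hform (take a As))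
                                          * prod_list (map Vform (take b Bs))) as bs"
    by (rule std_gens_staircase[where Hs = Hs and Vs = Vs, OF assms(3) fin(1)])
  show ?thesis
    unfolding assms(5) by (rule min_gens_Int_staircase[OF fin(2,3) staircase assms(4)])
qed

end
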